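(* Let $d\ge 1$ and let $J$ be a positive semi-definite $d^2\times d^2$ complex matrix. Write $d\cdot J$ in block form with $d\times d$ blocks, $d\cdot J=[M^{ij}]_{i,j=1}^d$, and let $D^i=M^{ii}$ ($i=1,\dots,d$) be its diagonal blocks. Then $$\frac{1}{d}\sum_{i=1}^d\boldsymbol{\lambda}(D^i)\succ\boldsymbol{\lambda}(J),$$ where each vector $\boldsymbol{\lambda}(D^i)\in\mathbb{R}^d$ is padded with $d(d-1)$ zeros to have length $d^2$.
   Context: For a Hermitian matrix $X$, $\boldsymbol{\lambda}(X)$ denotes the vector of eigenvalues of $X$ arranged in non-increasing order. For real vectors $x,y$ of the same length $n$, $x\succ y$ ($x$ majorizes $y$) means $\sum_{i=1}^k x_i^\downarrow\ge\sum_{i=1}^k y_i^\downarrow$ for all $k\in\{1,\dots,n\}$, where $x^\downarrow$ is the rearrangement of $x$ in non-increasing order. *)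

theory Defs
  imports "Jordan_Normal_Form.Schur_Decomposition" "Jordan_Normal_Form.Char_Poly"
begin

definition psd_mat :: "complex mat \<Rightarrow> bool" where
  "psd_mat A \<longleftrightarrow> A \<in> carrier_mat (dim_row A) (dim_row A) \<and> mat_adjoint A = A \<and>
     (\<forall>v \<in> carrier_vec (dim_row A). 0 \<le> Re (conjugate v \<bullet> (A *\<^sub>v v)))"

definition eigvals :: "complex mat \<Rightarrow> real list" where
  "eigvals A = (THE xs. sorted_wrt (\<ge>) xs \<and>
      char_poly A = (\<Prod>x\<leftarrow>xs. [:- complex_of_real x, 1:]))"

definition majorizes :: "real list \<Rightarrow> real list \<Rightarrow> bool" where
  "majorizes x y \<longleftrightarrow> length x = length y \<and>
     (\<forall>k \<in> {1..length x}. sum_list (take k (rev (sort y))) \<le> sum_list (take k (rev (sort x))))"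

definition diag_block :: "nat \<Rightarrow> 'a mat \<Rightarrow> nat \<Rightarrow> 'a mat" where
  "diag_block d A i = mat d d (\<lambda>(r, c). A $$ (i * d + r, i * d + c))"

end

(* Write J = sum_m mu_m w_m w_m^* with an orthonormal eigenbasis (w_m) and eigenvalues
   mu_1 >= mu_2 >= ... >= 0, and let x_(m,i) be the i-th block of w_m. The i-th diagonal block of
   d J is then a sum of positive rank-one matrices, D^i = sum_m d mu_m x_(m,i) x_(m,i)^*.
   For such sums a Ky Fan type bound holds: sum_(m<k) d mu_m |x_(m,i)|^2 is at most the sum of the
   k largest eigenvalues of D^i. Indeed, in an orthonormal eigenbasis (e_a) of D^i the rows
   beta_a = (sqrt (d mu_m) <x_(m,i), e_a>)_m are orthogonal with |beta_a|^2 = lambda_a(D^i), so every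
   column satisfies sum_a |beta_(a,m)|^2 / lambda_a <= 1, and a rearrangement argument finishes.
   Since sum_i |x_(m,i)|^2 = |w_m|^2 = 1, averaging these bounds over i gives
   sum_(m<k) mu_m <= sum_(a<k) (1/d) sum_i lambda_a(D^i), which are the partial-sum inequalities
   of the majorization. *)

theory Submission
  imports Defs "Jordan_Normal_Form.Spectral_Radius" "Berlekamp_Zassenhaus.Mahler_Measure"
begin

lemma cscalar_prod_eq_sum: "dim_vec y = n \<Longrightarrow> x \<bullet>c y = (\<Sum>i<n. x $ i * cnj (y $ i))"
  unfolding scalar_prod_def by (auto simp: atLeast0LessThan intro!: sum.cong)

lemma row_scalar_prod_eq_sum:
  assumes "A \<in> carrier_mat n k" "i < n" "dim_vec x = k"
  shows "row A i \<bullet> x = (\<Sum>j<k. A $$ (i, j) * x $ j)"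
  using assms by (auto simp: scalar_prod_def atLeast0LessThan intro!: sum.cong)

lemma mult_mat_vec_eq_sum:
  assumes "A \<in> carrier_mat n k" "i < n" "dim_vec x = k"
  shows "(A *\<^sub>v x) $ i = (\<Sum>j<k. A $$ (i, j) * x $ j)"
  using assms by (simp add: row_scalar_prod_eq_sum)

lemma index_mult_mat_eq_sum:
  assumes "X \<in> carrier_mat a b" "Y \<in> carrier_mat b c" "p < a" "q < c"
  shows "(X * Y) $$ (p, q) = (\<Sum>m<b. X $$ (p, m) * Y $$ (m, q))"
  using assms by (auto simp: scalar_prod_def atLeast0LessThan intro!: sum.cong)

lemma mat_adjoint_dim [simp]:
  "dim_row (mat_adjoint A) = dim_col A" "dim_col (mat_adjoint A) = dim_row A"
  unfolding mat_adjoint_def by simp_all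

lemma mat_adjoint_carrier: "A \<in> carrier_mat n k \<Longrightarrow> mat_adjoint A \<in> carrier_mat k n"
  unfolding carrier_mat_def by simp

lemma index_mat_adjoint [simp]:
  "i < dim_col A \<Longrightarrow> j < dim_row A \<Longrightarrow> mat_adjoint (A :: complex mat) $$ (i, j) = cnj (A $$ (j, i))"
  unfolding mat_adjoint_def mat_of_rows_def by simp

lemma cnj_cscalar_prod:
  "dim_vec (x :: complex vec) = dim_vec y \<Longrightarrow> cnj (x \<bullet>c y) = y \<bullet>c x"
  by (simp add: cscalar_prod_eq_sum mult.commute)

lemma cscalar_prod_mat_adjoint:
  assumes M: "M \<in> carrier_mat n k" and x: "dim_vec (x :: complex vec) = k" and y: "dim_vec y = n"
  shows "(M *\<^sub>v x) \<bullet>c y = x \<bullet>c (mat_adjoint M *\<^sub>v y)"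
proof -
  have "(M *\<^sub>v x) \<bullet>c y = (\<Sum>i<n. (\<Sum>j<k. M $$ (i, j) * x $ j) * cnj (y $ i))"
    unfolding cscalar_prod_eq_sum[OF y] by (intro sum.cong refl) (simp add: mult_mat_vec_eq_sum[OF M _ x])
  also have "\<dots> = (\<Sum>i<n. \<Sum>j<k. x $ j * cnj (cnj (M $$ (i, j)) * y $ i))"
    by (simp add: sum_distrib_left sum_distrib_right mult_ac)
  also have "\<dots> = (\<Sum>j<k. x $ j * cnj (\<Sum>i<n. cnj (M $$ (i, j)) * y $ i))"
    by (subst sum.swap) (simp add: sum_distrib_left)
  also have "\<dots> = (\<Sum>j<k. x $ j * cnj ((mat_adjoint M *\<^sub>v y) $ j))"
    using M y by (intro sum.cong refl) (simp add: row_scalar_prod_eq_sum[OF mat_adjoint_carrier[OF M]])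
  also have "\<dots> = x \<bullet>c (mat_adjoint M *\<^sub>v y)"
    using M by (simp add: cscalar_prod_eq_sum)
  finally show ?thesis .
qed

lemma cscalar_prod_hermitian:
  assumes "A \<in> carrier_mat n n" "mat_adjoint A = A" "dim_vec (x :: complex vec) = n" "dim_vec y = n"
  shows "(A *\<^sub>v x) \<bullet>c y = x \<bullet>c (A *\<^sub>v y)"
  using cscalar_prod_mat_adjoint[of A n n x y] assms by simp

lemma cscalar_prod_smult_left:
  "dim_vec (x :: complex vec) = dim_vec y \<Longrightarrow> (a \<cdot>\<^sub>v x) \<bullet>c y = a * (x \<bullet>c y)"
  by (simp add: cscalar_prod_eq_sum sum_distrib_left mult_ac)

lemma cscalar_prod_smult_right:
  "dim_vec (x :: complex vec) = dim_vec y \<Longrightarrow> x \<bullet>c (b \<cdot>\<^sub>v y) = cnj b * (x \<bullet>c y)"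
  by (simp add: cscalar_prod_eq_sum sum_distrib_left mult_ac)

definition sq_norm_vec :: "complex vec \<Rightarrow> real" where
  "sq_norm_vec x = (\<Sum>i<dim_vec x. (cmod (x $ i))\<^sup>2)"

lemma cscalar_prod_self: "x \<bullet>c x = complex_of_real (sq_norm_vec x)"
  by (simp add: cscalar_prod_eq_sum sq_norm_vec_def complex_norm_square del: of_real_power)

definition orthonormal :: "nat \<Rightarrow> complex vec list \<Rightarrow> bool" where
  "orthonormal n ws \<longleftrightarrow> length ws = n \<and> (\<forall>i<n. ws ! i \<in> carrier_vec n) \<and>
     (\<forall>i<n. \<forall>j<n. ws ! i \<bullet>c ws ! j = (if i = j then 1 else 0))"

lemma orthonormalD:
  assumes "orthonormal n ws"
  shows "length ws = n" "i < n \<Longrightarrow> ws ! i \<in> carrier_vec n"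
    "i < n \<Longrightarrow> j < n \<Longrightarrow> ws ! i \<bullet>c ws ! j = (if i = j then 1 else 0)"
  using assms unfolding orthonormal_def by auto

lemma orthonormal_mat_of_cols_carrier: "orthonormal n ws \<Longrightarrow> mat_of_cols n ws \<in> carrier_mat n n"
  by (metis orthonormalD(1) mat_of_cols_carrier(1))

lemma orthonormal_unitary:
  assumes ws: "orthonormal n ws"
  defines "W \<equiv> mat_of_cols n ws"
  shows "mat_adjoint W * W = 1\<^sub>m n" "W * mat_adjoint W = 1\<^sub>m n"
proof -
  have W: "W \<in> carrier_mat n n"
    unfolding W_def by (rule orthonormal_mat_of_cols_carrier[OF ws])
  show adj_W: "mat_adjoint W * W = 1\<^sub>m n"
  proof (rule eq_matI)
    fix i j assume "i < dim_row (1\<^sub>m n)" "j < dim_col (1\<^sub>m n)"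
    then have i: "i < n" and j: "j < n" by auto
    have "(mat_adjoint W * W) $$ (i, j) = (\<Sum>k<n. mat_adjoint W $$ (i, k) * W $$ (k, j))"
      by (rule index_mult_mat_eq_sum[OF mat_adjoint_carrier[OF W] W i j])
    also have "\<dots> = (\<Sum>k<n. ws ! j $ k * cnj (ws ! i $ k))"
      using W i j orthonormalD(1)[OF ws]
      by (intro sum.cong refl) (simp add: W_def mat_of_cols_index mult.commute)
    also have "\<dots> = ws ! j \<bullet>c ws ! i"
      using orthonormalD(2)[OF ws i] by (simp add: cscalar_prod_eq_sum)
    finally show "(mat_adjoint W * W) $$ (i, j) = 1\<^sub>m n $$ (i, j)"
      using orthonormalD(3)[OF ws j i] i j by simp
  qed (use W in auto)
  show "W * mat_adjoint W = 1\<^sub>m n"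
    by (rule mat_mult_left_right_inverse[OF mat_adjoint_carrier[OF W] W adj_W])
qed

lemma orthonormal_completeness:
  assumes ws: "orthonormal n ws" and "p < n" "q < n"
  shows "(\<Sum>m<n. ws ! m $ p * cnj (ws ! m $ q)) = (if p = q then 1 else 0)"
proof -
  define W where "W = mat_of_cols n ws"
  have W: "W \<in> carrier_mat n n"
    unfolding W_def by (rule orthonormal_mat_of_cols_carrier[OF ws])
  have "(W * mat_adjoint W) $$ (p, q) = (\<Sum>m<n. W $$ (p, m) * mat_adjoint W $$ (m, q))"
    by (rule index_mult_mat_eq_sum[OF W mat_adjoint_carrier[OF W] assms(2,3)])
  also have "\<dots> = (\<Sum>m<n. ws ! m $ p * cnj (ws ! m $ q))"
    using assms W orthonormalD(1)[OF ws]
    by (intro sum.cong refl) (simp add: W_def mat_of_cols_index)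
  finally have "(\<Sum>m<n. ws ! m $ p * cnj (ws ! m $ q)) = (W * mat_adjoint W) $$ (p, q)" ..
  then show ?thesis
    using orthonormal_unitary(2)[OF ws] assms by (simp add: W_def)
qed

lemma unitary_cscalar_prod:
  fixes W :: "complex mat"
  assumes unitary: "mat_adjoint W * W = 1\<^sub>m n" and W: "W \<in> carrier_mat n n"
    and x: "dim_vec x = n" and y: "y \<in> carrier_vec n"
  shows "(W *\<^sub>v x) \<bullet>c (W *\<^sub>v y) = x \<bullet>c y"
proof -
  have "(W *\<^sub>v x) \<bullet>c (W *\<^sub>v y) = x \<bullet>c (mat_adjoint W *\<^sub>v (W *\<^sub>v y))"
    by (rule cscalar_prod_mat_adjoint[OF W x]) (use W in simp)
  also have "mat_adjoint W *\<^sub>v (W *\<^sub>v y) = (mat_adjoint W * W) *\<^sub>v y"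
    by (rule assoc_mult_mat_vec[symmetric, OF mat_adjoint_carrier[OF W] W y])
  also have "\<dots> = y"
    unfolding unitary by (rule one_mult_mat_vec[OF y])
  finally show ?thesis .
qed

lemma orthonormal_map_unitary:
  assumes ys: "orthonormal n ys" and "mat_adjoint W * W = 1\<^sub>m n" "W \<in> carrier_mat n n"
  shows "orthonormal n (map ((*\<^sub>v) W) ys)"
  using orthonormalD[OF ys] assms unfolding orthonormal_def
  by (auto simp: unitary_cscalar_prod)

lemma sq_norm_vec_nonneg: "0 \<le> sq_norm_vec x"
  unfolding sq_norm_vec_def by (simp add: sum_nonneg)

lemma orthonormal_normalize:
  assumes ws: "corthogonal ws" "set ws \<subseteq> carrier_vec n" "length ws = n"
  shows "orthonormal n (map (\<lambda>w. complex_of_real (1 / sqrt (sq_norm_vec w)) \<cdot>\<^sub>v w) ws)"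
  unfolding orthonormal_def
proof (intro conjI allI impI)
  let ?c = "\<lambda>w. complex_of_real (1 / sqrt (sq_norm_vec w))"
  fix i j assume i: "i < n" and j: "j < n"
  have dims: "dim_vec (ws ! i) = n" "dim_vec (ws ! j) = n"
    using ws i j by (auto dest!: subsetD[OF ws(2)] nth_mem)
  have "(?c (ws ! i) \<cdot>\<^sub>v ws ! i) \<bullet>c (?c (ws ! j) \<cdot>\<^sub>v ws ! j)
      = ?c (ws ! i) * cnj (?c (ws ! j)) * (ws ! i \<bullet>c ws ! j)"
    using dims by (simp add: cscalar_prod_smult_left cscalar_prod_smult_right)
  also have "\<dots> = (if i = j then 1 else 0)"
  proof (cases "i = j")
    case True
    have "sq_norm_vec (ws ! i) \<noteq> 0"
      using corthogonalD[OF ws(1), of i i] i ws(3) by (simp add: cscalar_prod_self)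
    then have "sq_norm_vec (ws ! i) > 0"
      using sq_norm_vec_nonneg[of "ws ! i"] by linarith
    then show ?thesis
      using True by (simp add: cscalar_prod_self field_simps flip: of_real_mult)
  qed (use corthogonalD[OF ws(1), of i j] i j ws(3) in simp)
  finally show "map (\<lambda>w. ?c w \<cdot>\<^sub>v w) ws ! i \<bullet>c map (\<lambda>w. ?c w \<cdot>\<^sub>v w) ws ! j
      = (if i = j then 1 else 0)"
    using i j ws(3) by simp
qed (use ws in auto)

lemma exists_orthonormal_extension:
  assumes v: "v \<in> carrier_vec n" and v0: "v \<noteq> 0\<^sub>v n"
  shows "\<exists>ws c. orthonormal n ws \<and> ws ! 0 = c \<cdot>\<^sub>v v"
proof -
  interpret cof_vec_space n "TYPE(complex)" .
  have "n \<noteq> 0"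
    using v v0 by auto
  obtain b where b: "set b \<subseteq> carrier_vec n" "distinct b" "\<not> lin_dep (set b)" "length b = n"
    and hd_b: "hd b = v"
    using basis_completion[OF v v0] by blast
  then obtain vs where b_v: "b = v # vs"
    using \<open>n \<noteq> 0\<close> by (cases b) auto
  define ws where "ws = gram_schmidt n b"
  have ws: "corthogonal ws" "set ws \<subseteq> carrier_vec n" "length ws = n"
    using gram_schmidt_result[OF b(1-3) ws_def] b(4) by auto
  have "ws ! 0 = v"
    using gram_schmidt_hd[OF v, of vs] ws(3) \<open>n \<noteq> 0\<close>
    by (metis b_v hd_conv_nth list.size(3) ws_def)
  then show ?thesis
    using orthonormal_normalize[OF ws] ws(3) \<open>n \<noteq> 0\<close> by fastforce
qed

section \<open>Spectral theorem for Hermitian matrices\<close>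

lemma hermitian_index:
  assumes "(A :: complex mat) \<in> carrier_mat n n" "mat_adjoint A = A" "i < n" "j < n"
  shows "A $$ (i, j) = cnj (A $$ (j, i))"
  using assms index_mat_adjoint[of i A j] by simp

definition eigenbasis :: "complex mat \<Rightarrow> nat \<Rightarrow> complex vec list \<Rightarrow> real list \<Rightarrow> bool" where
  "eigenbasis A n ws \<mu>s \<longleftrightarrow> orthonormal n ws \<and> length \<mu>s = n \<and>
     (\<forall>i<n. A *\<^sub>v ws ! i = complex_of_real (\<mu>s ! i) \<cdot>\<^sub>v ws ! i)"

lemma index_unitary_conj:
  fixes A W :: "complex mat"
  assumes W: "W \<in> carrier_mat n k" and A: "A \<in> carrier_mat n n" and "i < k" "j < k"
  shows "(mat_adjoint W * A * W) $$ (i, j) = (A *\<^sub>v col W j) \<bullet>c col W i"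
proof -
  have "(mat_adjoint W * A * W) $$ (i, j) = ((mat_adjoint W * A) *\<^sub>v col W j) $ i"
    using assms by (simp add: mat_adjoint_carrier)
  also have "(mat_adjoint W * A) *\<^sub>v col W j = mat_adjoint W *\<^sub>v (A *\<^sub>v col W j)"
    using carrier_matD[OF W] by (intro assoc_mult_mat_vec[OF mat_adjoint_carrier[OF W] A] carrier_vecI) simp
  also have "(mat_adjoint W *\<^sub>v (A *\<^sub>v col W j)) $ i = (\<Sum>p<n. cnj (W $$ (p, i)) * (A *\<^sub>v col W j) $ p)"
    using assms by (subst mult_mat_vec_eq_sum[OF mat_adjoint_carrier[OF W]]) auto
  also have "\<dots> = (A *\<^sub>v col W j) \<bullet>c col W i"
    using assms by (subst cscalar_prod_eq_sum[of _ n]) (auto simp: mult.commute intro!: sum.cong)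
  finally show ?thesis .
qed

lemma hermitian_unitary_conj:
  fixes A W :: "complex mat"
  assumes W: "W \<in> carrier_mat n k" and A: "A \<in> carrier_mat n n" and herm: "mat_adjoint A = A"
  shows "mat_adjoint (mat_adjoint W * A * W) = mat_adjoint W * A * W"
proof (rule eq_matI)
  fix i j assume "i < dim_row (mat_adjoint W * A * W)" "j < dim_col (mat_adjoint W * A * W)"
  then have i: "i < k" and j: "j < k"
    using W by auto
  have "mat_adjoint (mat_adjoint W * A * W) $$ (i, j) = cnj ((mat_adjoint W * A * W) $$ (j, i))"
    using W i j by simp
  also have "\<dots> = cnj ((A *\<^sub>v col W i) \<bullet>c col W j)"
    by (simp only: index_unitary_conj[OF W A j i])
  also have "\<dots> = col W j \<bullet>c (A *\<^sub>v col W i)"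
    using A W by (intro cnj_cscalar_prod) simp
  also have "\<dots> = (A *\<^sub>v col W j) \<bullet>c col W i"
    using A W by (intro cscalar_prod_hermitian[OF A herm, symmetric]) auto
  also have "\<dots> = (mat_adjoint W * A * W) $$ (i, j)"
    by (simp only: index_unitary_conj[OF W A i j])
  finally show "mat_adjoint (mat_adjoint W * A * W) $$ (i, j) = (mat_adjoint W * A * W) $$ (i, j)" .
qed (auto)

lemma eigenbasis_unitary_conj:
  assumes ws: "orthonormal n ws" and A: "A \<in> carrier_mat n n"
    and ys: "eigenbasis (mat_adjoint (mat_of_cols n ws) * A * mat_of_cols n ws) n ys \<mu>s"
  shows "eigenbasis A n (map ((*\<^sub>v) (mat_of_cols n ws)) ys) \<mu>s"
proof -
  define W where "W = mat_of_cols n ws"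
  have W: "W \<in> carrier_mat n n"
    unfolding W_def by (rule orthonormal_mat_of_cols_carrier[OF ws])
  have WA: "mat_adjoint W \<in> carrier_mat n n"
    using W by (rule mat_adjoint_carrier)
  have AW: "A * W = W * (mat_adjoint W * A * W)"
  proof -
    have "W * (mat_adjoint W * A * W) = (W * mat_adjoint W) * (A * W)"
      using W WA A by (simp add: assoc_mult_mat[of _ n n _ n _ n])
    also have "\<dots> = A * W"
      using orthonormal_unitary(2)[OF ws] A W by (simp add: W_def)
    finally show ?thesis ..
  qed
  have eigen: "A *\<^sub>v (W *\<^sub>v ys ! i) = complex_of_real (\<mu>s ! i) \<cdot>\<^sub>v (W *\<^sub>v ys ! i)" if i: "i < n" for i
  proof -
    have y: "ys ! i \<in> carrier_vec n"
      using ys i by (simp add: eigenbasis_def orthonormalD)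
    have "A *\<^sub>v (W *\<^sub>v ys ! i) = (W * (mat_adjoint W * A * W)) *\<^sub>v ys ! i"
      unfolding AW[symmetric] by (rule assoc_mult_mat_vec[symmetric, OF A W y])
    also have "\<dots> = W *\<^sub>v ((mat_adjoint W * A * W) *\<^sub>v ys ! i)"
      using W WA A y by (intro assoc_mult_mat_vec) auto
    also have "\<dots> = complex_of_real (\<mu>s ! i) \<cdot>\<^sub>v (W *\<^sub>v ys ! i)"
      using ys i y W by (simp add: eigenbasis_def W_def mult_mat_vec)
    finally show ?thesis .
  qed
  show ?thesis
    using ys eigen orthonormal_map_unitary[OF _ orthonormal_unitary(1)[OF ws] W[unfolded W_def]]
    unfolding eigenbasis_def W_def by (auto simp: orthonormalD)
qed

lemma mult_mat_vec_vCons: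
  assumes A: "A \<in> carrier_mat (Suc m) (Suc m)" and z: "z \<in> carrier_vec m"
    and col0: "\<forall>i<Suc m. A $$ (i, 0) = (if i = 0 then e else 0)"
    and row0: "\<forall>j<Suc m. A $$ (0, j) = (if j = 0 then e else 0)"
  shows "A *\<^sub>v vCons a z = vCons (e * a) (mat m m (\<lambda>(i, j). A $$ (Suc i, Suc j)) *\<^sub>v z)"
proof (rule eq_vecI)
  fix i assume "i < dim_vec (vCons (e * a) (mat m m (\<lambda>(i, j). A $$ (Suc i, Suc j)) *\<^sub>v z))"
  then have i: "i < Suc m" by simp
  have "(A *\<^sub>v vCons a z) $ i = A $$ (i, 0) * a + (\<Sum>j<m. A $$ (i, Suc j) * z $ j)"
    by (subst mult_mat_vec_eq_sum[OF A i]) (use z in \<open>simp_all add: sum.lessThan_Suc_shift del: sum.lessThan_Suc\<close>)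
  then show "(A *\<^sub>v vCons a z) $ i = vCons (e * a) (mat m m (\<lambda>(i, j). A $$ (Suc i, Suc j)) *\<^sub>v z) $ i"
    using i col0 row0 z by (cases i) (auto simp: scalar_prod_def atLeast0LessThan intro!: sum.cong)
qed (use A z in auto)

lemma smult_vCons: "c \<cdot>\<^sub>v vCons a v = vCons (c * a) (c \<cdot>\<^sub>v v)"
  by (rule eq_vecI) (auto simp: vec_index_vCons)

lemma eigenbasis_vCons:
  assumes A: "A \<in> carrier_mat (Suc m) (Suc m)"
    and col0: "\<forall>i<Suc m. A $$ (i, 0) = (if i = 0 then complex_of_real r else 0)"
    and row0: "\<forall>j<Suc m. A $$ (0, j) = (if j = 0 then complex_of_real r else 0)"
    and zs: "eigenbasis (mat m m (\<lambda>(i, j). A $$ (Suc i, Suc j))) m zs ls"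
  shows "eigenbasis A (Suc m) (vCons 1 (0\<^sub>v m) # map (vCons 0) zs) (r # ls)"
proof -
  have len: "length zs = m" "length ls = m"
    and z: "\<And>i. i < m \<Longrightarrow> zs ! i \<in> carrier_vec m"
    and orth: "\<And>i j. i < m \<Longrightarrow> j < m \<Longrightarrow> zs ! i \<bullet>c zs ! j = (if i = j then 1 else 0)"
    and eig: "\<And>i. i < m \<Longrightarrow> mat m m (\<lambda>(i, j). A $$ (Suc i, Suc j)) *\<^sub>v zs ! i
                = complex_of_real (ls ! i) \<cdot>\<^sub>v zs ! i"
    using zs unfolding eigenbasis_def orthonormal_def by auto
  note Av = mult_mat_vec_vCons[OF A _ col0 row0]
  show ?thesis
    unfolding eigenbasis_def orthonormal_def
  proof (intro conjI allI impI)
    fix i assume i: "i < Suc m"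
    show "(vCons 1 (0\<^sub>v m) # map (vCons 0) zs) ! i \<in> carrier_vec (Suc m)"
      using i z len by (cases i) auto
    show "A *\<^sub>v (vCons 1 (0\<^sub>v m) # map (vCons 0) zs) ! i
        = complex_of_real ((r # ls) ! i) \<cdot>\<^sub>v (vCons 1 (0\<^sub>v m) # map (vCons 0) zs) ! i"
      using i z eig len by (cases i) (auto simp: Av smult_vCons)
    fix j assume j: "j < Suc m"
    show "(vCons 1 (0\<^sub>v m) # map (vCons 0) zs) ! i \<bullet>c (vCons 1 (0\<^sub>v m) # map (vCons 0) zs) ! j
        = (if i = j then 1 else 0)"
      using i j z orth len by (cases i; cases j) auto
  qed (use len in auto)
qed

lemma hermitian_deflation:
  fixes A :: "complex mat"
  assumes A: "A \<in> carrier_mat (Suc m) (Suc m)" and herm: "mat_adjoint A = A"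
    and ws: "orthonormal (Suc m) ws" and eig: "A *\<^sub>v ws ! 0 = e \<cdot>\<^sub>v ws ! 0"
  defines "A' \<equiv> mat_adjoint (mat_of_cols (Suc m) ws) * A * mat_of_cols (Suc m) ws"
  shows "mat_adjoint A' = A'"
    and "\<forall>i<Suc m. A' $$ (i, 0) = (if i = 0 then complex_of_real (Re e) else 0)"
    and "\<forall>j<Suc m. A' $$ (0, j) = (if j = 0 then complex_of_real (Re e) else 0)"
proof -
  define W where "W = mat_of_cols (Suc m) ws"
  have W: "W \<in> carrier_mat (Suc m) (Suc m)"
    unfolding W_def by (rule orthonormal_mat_of_cols_carrier[OF ws])
  have A': "A' \<in> carrier_mat (Suc m) (Suc m)"
    unfolding A'_def W_def[symmetric] using W A by (auto simp: mat_adjoint_carrier)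
  show herm': "mat_adjoint A' = A'"
    unfolding A'_def W_def[symmetric] by (rule hermitian_unitary_conj[OF W A herm])
  have col0: "A' $$ (i, 0) = (if i = 0 then e else 0)" if i: "i < Suc m" for i
  proof -
    have col_W: "col W j = ws ! j" if "j < Suc m" for j
      using that orthonormalD[OF ws] by (simp add: W_def)
    have "A' $$ (i, 0) = (A *\<^sub>v col W 0) \<bullet>c col W i"
      unfolding A'_def W_def[symmetric] using i by (intro index_unitary_conj[OF W A]) auto
    also have "\<dots> = e * (ws ! 0 \<bullet>c ws ! i)"
      using i orthonormalD(2)[OF ws i] orthonormalD(2)[OF ws zero_less_Suc]
      by (simp add: col_W eig cscalar_prod_smult_left carrier_vecD)
    finally have "A' $$ (i, 0) = e * (ws ! 0 \<bullet>c ws ! i)" .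
    then show ?thesis
      using orthonormalD(3)[OF ws zero_less_Suc i] by auto
  qed
  have cnj_e: "cnj e = e"
    using col0[of 0] hermitian_index[OF A' herm', of 0 0] by simp
  then have e_real: "complex_of_real (Re e) = e"
    unfolding complex_eq_iff by simp
  show "\<forall>i<Suc m. A' $$ (i, 0) = (if i = 0 then complex_of_real (Re e) else 0)"
    using col0 e_real by simp
  show "\<forall>j<Suc m. A' $$ (0, j) = (if j = 0 then complex_of_real (Re e) else 0)"
  proof (intro allI impI)
    fix j assume "j < Suc m"
    then show "A' $$ (0, j) = (if j = 0 then complex_of_real (Re e) else 0)"
      using col0[of j] hermitian_index[OF A' herm' zero_less_Suc, of j] cnj_e e_real by auto
  qed
qed

lemma hermitian_lower_block:
  fixes A :: "complex mat"
  assumes "A \<in> carrier_mat (Suc m) (Suc m)" "mat_adjoint A = A"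
  shows "mat_adjoint (mat m m (\<lambda>(i, j). A $$ (Suc i, Suc j))) = mat m m (\<lambda>(i, j). A $$ (Suc i, Suc j))"
proof (rule eq_matI)
  fix i j assume "i < dim_row (mat m m (\<lambda>(i, j). A $$ (Suc i, Suc j)))"
    "j < dim_col (mat m m (\<lambda>(i, j). A $$ (Suc i, Suc j)))"
  then show "mat_adjoint (mat m m (\<lambda>(i, j). A $$ (Suc i, Suc j))) $$ (i, j)
      = mat m m (\<lambda>(i, j). A $$ (Suc i, Suc j)) $$ (i, j)"
    using hermitian_index[OF assms, of "Suc i" "Suc j"] by simp
qed auto

lemma hermitian_eigenbasis_exists:
  assumes "A \<in> carrier_mat n n" "mat_adjoint A = A"
  shows "\<exists>ws \<mu>s. eigenbasis A n ws \<mu>s"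
  using assms
proof (induction n arbitrary: A)
  case 0
  then show ?case
    by (intro exI[of _ "[]"]) (simp add: eigenbasis_def orthonormal_def)
next
  case (Suc m A)
  note A = Suc.prems(1) and herm = Suc.prems(2)
  obtain e v where "eigenvector A v e"
    using spectrum_non_empty[OF A] unfolding spectrum_def eigenvalue_def by auto
  then have v: "v \<in> carrier_vec (Suc m)" "v \<noteq> 0\<^sub>v (Suc m)" and Av: "A *\<^sub>v v = e \<cdot>\<^sub>v v"
    using A unfolding eigenvector_def by auto
  obtain ws c where ws: "orthonormal (Suc m) ws" and ws0: "ws ! 0 = c \<cdot>\<^sub>v v"
    using exists_orthonormal_extension[OF v] by blast
  have "A *\<^sub>v ws ! 0 = e \<cdot>\<^sub>v ws ! 0"
    using A v Av by (simp add: ws0 mult_mat_vec smult_smult_assoc mult.commute)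
  note deflation = hermitian_deflation[OF A herm ws this]
  let ?A' = "mat_adjoint (mat_of_cols (Suc m) ws) * A * mat_of_cols (Suc m) ws"
  have A': "?A' \<in> carrier_mat (Suc m) (Suc m)"
    using A orthonormal_mat_of_cols_carrier[OF ws] by (metis mult_carrier_mat mat_adjoint_carrier)
  obtain zs ls where "eigenbasis (mat m m (\<lambda>(i, j). ?A' $$ (Suc i, Suc j))) m zs ls"
    using Suc.IH[OF _ hermitian_lower_block[OF A' deflation(1)]] by auto
  then have "eigenbasis ?A' (Suc m) (vCons 1 (0\<^sub>v m) # map (vCons 0) zs) (Re e # ls)"
    by (rule eigenbasis_vCons[OF A' deflation(2,3)])
  then show ?case
    using eigenbasis_unitary_conj[OF ws A] by blast
qed

lemma eigenbasis_diagonalization: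
  assumes A: "A \<in> carrier_mat n n" and eb: "eigenbasis A n ws \<mu>s"
  defines "W \<equiv> mat_of_cols n ws"
  shows "A = W * mat_diag n (\<lambda>i. complex_of_real (\<mu>s ! i)) * mat_adjoint W"
proof -
  have ws: "orthonormal n ws" and eig: "\<And>j. j < n \<Longrightarrow> A *\<^sub>v ws ! j = complex_of_real (\<mu>s ! j) \<cdot>\<^sub>v ws ! j"
    using eb unfolding eigenbasis_def by auto
  have W: "W \<in> carrier_mat n n"
    unfolding W_def by (rule orthonormal_mat_of_cols_carrier[OF ws])
  have AW: "A * W = W * mat_diag n (\<lambda>i. complex_of_real (\<mu>s ! i))"
  proof (rule eq_matI)
    fix i j assume "i < dim_row (W * mat_diag n (\<lambda>i. complex_of_real (\<mu>s ! i)))"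
      "j < dim_col (W * mat_diag n (\<lambda>i. complex_of_real (\<mu>s ! i)))"
    then have i: "i < n" and j: "j < n"
      using W by (auto simp: mat_diag_def)
    have "(A * W) $$ (i, j) = (A *\<^sub>v col W j) $ i"
      using A W i j by simp
    also have "\<dots> = complex_of_real (\<mu>s ! j) * ws ! j $ i"
      using orthonormalD(1)[OF ws] orthonormalD(2)[OF ws j] i j
      by (simp add: W_def eig carrier_vecD[OF orthonormalD(2)[OF ws j]])
    also have "\<dots> = W $$ (i, j) * complex_of_real (\<mu>s ! j)"
      using orthonormalD(1)[OF ws] i j by (simp add: W_def mat_of_cols_index)
    also have "\<dots> = (W * mat_diag n (\<lambda>i. complex_of_real (\<mu>s ! i))) $$ (i, j)"
      using i j by (simp add: mat_diag_mult_right[OF W])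
    finally show "(A * W) $$ (i, j) = (W * mat_diag n (\<lambda>i. complex_of_real (\<mu>s ! i))) $$ (i, j)" .
  qed (use A W in \<open>auto simp: mat_diag_def\<close>)
  have "A = A * (W * mat_adjoint W)"
    using A orthonormal_unitary(2)[OF ws] by (simp add: W_def)
  also have "\<dots> = (A * W) * mat_adjoint W"
    using A W by (simp add: assoc_mult_mat[of _ n n _ n _ n] mat_adjoint_carrier)
  finally show ?thesis
    unfolding AW .
qed

lemma char_poly_eigenbasis:
  assumes A: "A \<in> carrier_mat n n" and eb: "eigenbasis A n ws \<mu>s"
  shows "char_poly A = (\<Prod>x\<leftarrow>\<mu>s. [:- complex_of_real x, 1:])"
proof -
  define W where "W = mat_of_cols n ws"
  define L where "L = mat_diag n (\<lambda>i. complex_of_real (\<mu>s ! i))"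
  have ws: "orthonormal n ws" and len: "length \<mu>s = n"
    using eb unfolding eigenbasis_def by auto
  have W: "W \<in> carrier_mat n n"
    unfolding W_def by (rule orthonormal_mat_of_cols_carrier[OF ws])
  have "similar_mat A L"
    using eigenbasis_diagonalization[OF A eb] orthonormal_unitary[OF ws] W A
    unfolding W_def[symmetric] L_def[symmetric]
    by (intro similar_matI[of _ _ W "mat_adjoint W" n]) (auto simp: L_def mat_adjoint_carrier)
  then have "char_poly A = char_poly L"
    by (rule char_poly_similar)
  also have "\<dots> = (\<Prod>a\<leftarrow>diag_mat L. [:- a, 1:])"
    by (rule char_poly_upper_triangular) (auto simp: upper_triangular_def L_def mat_diag_def)
  also have "diag_mat L = map complex_of_real \<mu>s"
    using len by (intro nth_equalityI) (auto simp: diag_mat_def L_def mat_diag_def)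
  finally show ?thesis
    by (simp add: comp_def)
qed

lemma sorted_desc_mset_eq:
  fixes xs ys :: "'a :: linorder list"
  assumes "sorted_wrt (\<ge>) xs" "sorted_wrt (\<ge>) ys" "mset xs = mset ys"
  shows "xs = ys"
proof -
  have "sort (rev ys) = rev xs" "sort (rev ys) = rev ys"
    using assms by (auto simp: sorted_wrt_rev intro!: properties_for_sort)
  then show ?thesis
    by simp
qed

lemma eigvals_eigenbasis:
  assumes A: "A \<in> carrier_mat n n" and eb: "eigenbasis A n ws \<mu>s" and sorted: "sorted_wrt (\<ge>) \<mu>s"
  shows "eigvals A = \<mu>s"
  unfolding eigvals_def
proof (rule the_equality)
  show "sorted_wrt (\<ge>) \<mu>s \<and> char_poly A = (\<Prod>x\<leftarrow>\<mu>s. [:- complex_of_real x, 1:])"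
    using sorted char_poly_eigenbasis[OF A eb] by simp
  fix xs assume xs: "sorted_wrt (\<ge>) xs \<and> char_poly A = (\<Prod>x\<leftarrow>xs. [:- complex_of_real x, 1:])"
  then have "(\<Prod>a\<leftarrow>map complex_of_real xs. [:- a, 1:]) = (\<Prod>a\<leftarrow>map complex_of_real \<mu>s. [:- a, 1:])"
    using char_poly_eigenbasis[OF A eb] by (simp add: comp_def)
  then have "mset (map complex_of_real xs) = mset (map complex_of_real \<mu>s)"
    by (rule reconstruct_poly_monic_defines_mset)
  then have "image_mset Re (mset (map complex_of_real xs)) = image_mset Re (mset (map complex_of_real \<mu>s))"
    by simp
  then have "mset xs = mset \<mu>s"
    by (simp add: multiset.map_comp comp_def)
  then show "xs = \<mu>s"
    using xs sorted by (blast intro: sorted_desc_mset_eq)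
qed

lemma eigenbasis_reorder:
  assumes eb: "eigenbasis A n ws \<mu>s" and ids: "mset ids = mset [0..<n]"
  shows "eigenbasis A n (map ((!) ws) ids) (map ((!) \<mu>s) ids)"
proof -
  have len: "length ids = n" and dist: "distinct ids"
    using ids by (metis length_upt minus_nat.diff_0 size_mset, metis distinct_upt mset_eq_imp_distinct_iff)
  have idx: "ids ! i < n" if "i < n" for i
    using ids len that by (metis atLeast_upt lessThan_iff nth_mem set_mset_mset)
  show ?thesis
    using eb idx len nth_eq_iff_index_eq[OF dist]
    unfolding eigenbasis_def orthonormal_def by auto
qed

lemma hermitian_sorted_eigenbasis:
  assumes A: "A \<in> carrier_mat n n" and herm: "mat_adjoint A = A"
  shows "\<exists>ws. eigenbasis A n ws (eigvals A) \<and> sorted_wrt (\<ge>) (eigvals A)"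
proof -
  obtain ws \<mu>s where eb: "eigenbasis A n ws \<mu>s"
    using hermitian_eigenbasis_exists[OF A herm] by blast
  define ids where "ids = sort_key (\<lambda>i. - \<mu>s ! i) [0..<n]"
  have eb': "eigenbasis A n (map ((!) ws) ids) (map ((!) \<mu>s) ids)"
    by (rule eigenbasis_reorder[OF eb]) (simp add: ids_def)
  have "sorted (map (\<lambda>i. - \<mu>s ! i) ids)"
    unfolding ids_def by (rule sorted_sort_key)
  then have sorted: "sorted_wrt (\<ge>) (map ((!) \<mu>s) ids)"
    by (simp add: sorted_wrt_map)
  show ?thesis
    using eb' sorted eigvals_eigenbasis[OF A eb' sorted] by auto
qed

lemma eigenbasis_expansion:
  assumes A: "A \<in> carrier_mat n n" and eb: "eigenbasis A n ws \<mu>s" and "p < n" "q < n"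
  shows "A $$ (p, q) = (\<Sum>m<n. complex_of_real (\<mu>s ! m) * ws ! m $ p * cnj (ws ! m $ q))"
proof -
  define W where "W = mat_of_cols n ws"
  define L where "L = mat_diag n (\<lambda>i. complex_of_real (\<mu>s ! i))"
  have ws: "orthonormal n ws"
    using eb unfolding eigenbasis_def by auto
  have W: "W \<in> carrier_mat n n"
    unfolding W_def by (rule orthonormal_mat_of_cols_carrier[OF ws])
  have WL: "W * L \<in> carrier_mat n n"
    using W by (simp add: L_def)
  have "A $$ (p, q) = (W * L * mat_adjoint W) $$ (p, q)"
    using eigenbasis_diagonalization[OF A eb] by (simp add: W_def L_def)
  also have "\<dots> = (\<Sum>m<n. (W * L) $$ (p, m) * mat_adjoint W $$ (m, q))"
    by (rule index_mult_mat_eq_sum[OF WL mat_adjoint_carrier[OF W] assms(3,4)])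
  also have "\<dots> = (\<Sum>m<n. complex_of_real (\<mu>s ! m) * ws ! m $ p * cnj (ws ! m $ q))"
    using assms W orthonormalD(1)[OF ws] mat_of_cols_index[of _ n _ ws, folded W_def]
    by (intro sum.cong refl) (simp add: L_def mat_diag_mult_right[OF W])
  finally show ?thesis .
qed

lemma psd_eigenbasis_nonneg:
  assumes psd: "psd_mat A" and A: "A \<in> carrier_mat n n" and eb: "eigenbasis A n ws \<mu>s" and m: "m < n"
  shows "0 \<le> \<mu>s ! m"
proof -
  have w: "ws ! m \<in> carrier_vec n" and w1: "ws ! m \<bullet>c ws ! m = 1"
    and eig: "A *\<^sub>v ws ! m = complex_of_real (\<mu>s ! m) \<cdot>\<^sub>v ws ! m"
    using eb m unfolding eigenbasis_def orthonormal_def by auto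
  have "conjugate (ws ! m) \<bullet> (A *\<^sub>v ws ! m) = complex_of_real (\<mu>s ! m) * (ws ! m \<bullet>c ws ! m)"
    using w by (simp add: eig conjugate_vec_sprod_comm[OF w w])
  then have "conjugate (ws ! m) \<bullet> (A *\<^sub>v ws ! m) = complex_of_real (\<mu>s ! m)"
    using w1 by simp
  then show ?thesis
    using psd A w unfolding psd_mat_def by force
qed

section \<open>Top eigenvalues of sums of rank-one matrices\<close>

lemma cscalar_prod_rank_one_sum:
  fixes D :: "complex mat" and xs :: "nat \<Rightarrow> complex vec" and c :: "nat \<Rightarrow> complex"
  assumes D: "D \<in> carrier_mat d d"
    and D_eq: "\<And>r s. r < d \<Longrightarrow> s < d \<Longrightarrow> D $$ (r, s) = (\<Sum>m<N. c m * xs m $ r * cnj (xs m $ s))"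
    and xs: "\<And>m. m < N \<Longrightarrow> dim_vec (xs m) = d" and u: "dim_vec u = d" and v: "dim_vec v = d"
  shows "(D *\<^sub>v v) \<bullet>c u = (\<Sum>m<N. c m * (xs m \<bullet>c u) * (v \<bullet>c xs m))"
proof -
  let ?t = "\<lambda>m r s. c m * (xs m $ r * cnj (u $ r)) * (v $ s * cnj (xs m $ s))"
  have "(D *\<^sub>v v) \<bullet>c u = (\<Sum>r<d. \<Sum>s<d. \<Sum>m<N. ?t m r s)"
    unfolding cscalar_prod_eq_sum[OF u]
    by (intro sum.cong refl)
      (simp add: mult_mat_vec_eq_sum[OF D _ v] D_eq sum_distrib_left sum_distrib_right mult_ac)
  also have "\<dots> = (\<Sum>m<N. \<Sum>r<d. \<Sum>s<d. ?t m r s)"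
    by (simp only: sum.swap[of _ "{..<d}" "{..<N}"])
  also have "\<dots> = (\<Sum>m<N. c m * (\<Sum>r<d. xs m $ r * cnj (u $ r)) * (\<Sum>s<d. v $ s * cnj (xs m $ s)))"
    by (intro sum.cong refl) (simp add: sum_product sum_distrib_left mult_ac)
  also have "\<dots> = (\<Sum>m<N. c m * (xs m \<bullet>c u) * (v \<bullet>c xs m))"
    using xs u by (intro sum.cong refl) (simp add: cscalar_prod_eq_sum)
  finally show ?thesis .
qed

lemma parseval:
  assumes es: "orthonormal d es" and x: "dim_vec x = d"
  shows "(\<Sum>a<d. (cmod (x \<bullet>c es ! a))\<^sup>2) = sq_norm_vec x"
proof -
  have es_dim: "\<And>a. a < d \<Longrightarrow> dim_vec (es ! a) = d"
    using orthonormalD(2)[OF es] by (simp add: carrier_vecD)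
  have "x \<in> carrier_vec d"
    using x by (rule carrier_vecI)
  then have "complex_of_real (sq_norm_vec x) = (1\<^sub>m d *\<^sub>v x) \<bullet>c x"
    by (simp add: cscalar_prod_self)
  also have "\<dots> = (\<Sum>a<d. 1 * (es ! a \<bullet>c x) * (x \<bullet>c es ! a))"
    using orthonormal_completeness[OF es] es_dim x
    by (intro cscalar_prod_rank_one_sum[where xs = "(!) es"]) auto
  also have "\<dots> = (\<Sum>a<d. complex_of_real ((cmod (x \<bullet>c es ! a))\<^sup>2))"
  proof (intro sum.cong refl)
    fix a assume "a \<in> {..<d}"
    then have "es ! a \<bullet>c x = cnj (x \<bullet>c es ! a)"
      using es_dim x by (intro cnj_cscalar_prod[symmetric]) auto
    then show "1 * (es ! a \<bullet>c x) * (x \<bullet>c es ! a) = complex_of_real ((cmod (x \<bullet>c es ! a))\<^sup>2)"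
      by (simp only: complex_norm_square mult_1 mult.commute)
  qed
  also have "\<dots> = complex_of_real (\<Sum>a<d. (cmod (x \<bullet>c es ! a))\<^sup>2)"
    by (simp only: of_real_sum)
  finally show ?thesis
    by (simp only: of_real_eq_iff)
qed

lemma weighted_sum_le_initial_sum:
  fixes \<nu> c :: "nat \<Rightarrow> real"
  assumes antimono: "\<And>a b. a \<le> b \<Longrightarrow> b < d \<Longrightarrow> \<nu> b \<le> \<nu> a"
    and nonneg: "\<And>a. a < d \<Longrightarrow> 0 \<le> \<nu> a"
    and c: "\<And>a. a < d \<Longrightarrow> 0 \<le> c a \<and> c a \<le> 1" and sum_c: "(\<Sum>a<d. c a) \<le> real k"
  shows "(\<Sum>a<d. \<nu> a * c a) \<le> (\<Sum>a<min k d. \<nu> a)"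
proof (cases "d \<le> k")
  case True
  have "(\<Sum>a<d. \<nu> a * c a) \<le> (\<Sum>a<d. \<nu> a)"
    using nonneg c by (intro sum_mono) (simp add: mult_left_le)
  then show ?thesis
    using True by simp
next
  case False
  then have kd: "k < d" by simp
  have split: "(\<Sum>a<d. g a) = (\<Sum>a<k. g a) + (\<Sum>a\<in>{k..<d}. g a)" for g :: "nat \<Rightarrow> real"
    using kd by (metis atLeast0LessThan le0 less_imp_le_nat sum.atLeastLessThan_concat)
  \<comment> \<open>Compare both sides with the threshold \<open>\<nu> k\<close>: the deficit \<open>1 - c a\<close> on the first \<open>k\<close>
      indices is weighted by at least \<open>\<nu> k\<close>, the excess beyond \<open>k\<close> by at most \<open>\<nu> k\<close>.\<close>
  have low: "(\<Sum>a<k. \<nu> k * (1 - c a)) \<le> (\<Sum>a<k. \<nu> a * (1 - c a))"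
    using antimono c kd by (intro sum_mono mult_right_mono) auto
  have high: "(\<Sum>a\<in>{k..<d}. \<nu> a * c a) \<le> (\<Sum>a\<in>{k..<d}. \<nu> k * c a)"
    using antimono c kd by (intro sum_mono mult_right_mono) auto
  have "\<nu> k * (\<Sum>a<d. c a) \<le> \<nu> k * real k"
    using sum_c nonneg kd by (intro mult_left_mono) auto
  moreover have "(\<Sum>a<k. \<nu> k * (1 - c a)) = \<nu> k * real k - \<nu> k * (\<Sum>a<k. c a)"
    "(\<Sum>a<k. \<nu> a * (1 - c a)) = (\<Sum>a<k. \<nu> a) - (\<Sum>a<k. \<nu> a * c a)"
    "(\<Sum>a\<in>{k..<d}. \<nu> k * c a) = \<nu> k * (\<Sum>a\<in>{k..<d}. c a)"
    by (simp_all add: sum_subtractf sum_distrib_left right_diff_distrib)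
  ultimately have "(\<Sum>a<d. \<nu> a * c a) \<le> (\<Sum>a<k. \<nu> a)"
    using low high split[of c] split[of "\<lambda>a. \<nu> a * c a"] by (simp add: distrib_left)
  then show ?thesis
    using kd by simp
qed

definition orthogonal_rows :: "nat \<Rightarrow> nat \<Rightarrow> (nat \<Rightarrow> nat \<Rightarrow> complex) \<Rightarrow> (nat \<Rightarrow> real) \<Rightarrow> bool" where
  "orthogonal_rows d N \<beta> \<nu> \<longleftrightarrow> (\<forall>a<d. \<forall>b<d.
     (\<Sum>n<N. \<beta> a n * cnj (\<beta> b n)) = (if a = b then complex_of_real (\<nu> a) else 0))"

lemma orthogonal_rows_combination:
  fixes \<beta> :: "nat \<Rightarrow> nat \<Rightarrow> complex" and \<nu> :: "nat \<Rightarrow> real" and u :: "nat \<Rightarrow> complex"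
  assumes orth: "orthogonal_rows d N \<beta> \<nu>"
  shows "(\<Sum>n<N. (\<Sum>a<d. u a * \<beta> a n) * cnj (\<Sum>b<d. u b * \<beta> b n))
    = (\<Sum>a<d. u a * cnj (u a) * complex_of_real (\<nu> a))"
proof -
  have "(\<Sum>n<N. (\<Sum>a<d. u a * \<beta> a n) * cnj (\<Sum>b<d. u b * \<beta> b n))
      = (\<Sum>n<N. \<Sum>a<d. \<Sum>b<d. u a * cnj (u b) * (\<beta> a n * cnj (\<beta> b n)))"
    by (simp add: sum_product cnj_sum mult_ac)
  also have "\<dots> = (\<Sum>a<d. \<Sum>b<d. u a * cnj (u b) * (\<Sum>n<N. \<beta> a n * cnj (\<beta> b n)))"
    by (simp only: sum_distrib_left sum.swap[of _ "{..<N}"])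
  also have "\<dots> = (\<Sum>a<d. \<Sum>b<d. if a = b then u a * cnj (u b) * complex_of_real (\<nu> a) else 0)"
    using orth unfolding orthogonal_rows_def by (intro sum.cong refl) auto
  also have "\<dots> = (\<Sum>a<d. u a * cnj (u a) * complex_of_real (\<nu> a))"
    by simp
  finally show ?thesis .
qed

lemma orthogonal_rows_sq_norm:
  fixes \<beta> :: "nat \<Rightarrow> nat \<Rightarrow> complex" and \<nu> :: "nat \<Rightarrow> real"
  assumes orth: "orthogonal_rows d N \<beta> \<nu>"
    and a: "a < d"
  shows "\<nu> a = (\<Sum>n<N. (cmod (\<beta> a n))\<^sup>2)"
proof -
  have "complex_of_real (\<nu> a) = (\<Sum>n<N. \<beta> a n * cnj (\<beta> a n))"
    using orth a by (simp add: orthogonal_rows_def)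
  also have "\<dots> = complex_of_real (\<Sum>n<N. (cmod (\<beta> a n))\<^sup>2)"
    by (simp add: complex_norm_square del: of_real_power)
  finally show ?thesis
    by (simp only: of_real_eq_iff)
qed

lemma orthogonal_rows_nonneg: "orthogonal_rows d N \<beta> \<nu> \<Longrightarrow> a < d \<Longrightarrow> 0 \<le> \<nu> a"
  by (simp add: orthogonal_rows_sq_norm sum_nonneg)

lemma orthogonal_rows_column_bound:
  fixes \<beta> :: "nat \<Rightarrow> nat \<Rightarrow> complex" and \<nu> :: "nat \<Rightarrow> real"
  assumes orth: "orthogonal_rows d N \<beta> \<nu>"
    and m: "m < N"
  shows "(\<Sum>a<d. (cmod (\<beta> a m))\<^sup>2 / \<nu> a) \<le> 1"
proof -
  define p where "p = (\<Sum>a<d. (cmod (\<beta> a m))\<^sup>2 / \<nu> a)"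
  define u where "u a = cnj (\<beta> a m) / complex_of_real (\<nu> a)" for a
  define t where "t n = (\<Sum>a<d. u a * \<beta> a n)" for n
  have "0 \<le> p"
    using orthogonal_rows_nonneg[OF orth] unfolding p_def by (intro sum_nonneg divide_nonneg_nonneg) auto
  have u_term: "u a * cnj (u a) * complex_of_real (\<nu> a) = complex_of_real ((cmod (\<beta> a m))\<^sup>2 / \<nu> a)" for a
  proof -
    have "u a * cnj (u a) * complex_of_real (\<nu> a) = \<beta> a m * cnj (\<beta> a m) / complex_of_real (\<nu> a)"
      by (cases "\<nu> a = 0") (simp_all add: u_def field_simps)
    then show ?thesis
      by (simp only: flip: complex_norm_square of_real_divide)
  qed
  \<comment> \<open>\<open>t\<close> is the \<open>m\<close>-th column of the orthogonal projection onto the span of the rows,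
      so its \<open>m\<close>-th entry and its squared norm coincide: both are \<open>p\<close>.\<close>
  have "complex_of_real (\<Sum>n<N. (cmod (t n))\<^sup>2) = (\<Sum>n<N. t n * cnj (t n))"
    by (simp add: complex_norm_square del: of_real_power)
  also have "\<dots> = (\<Sum>a<d. u a * cnj (u a) * complex_of_real (\<nu> a))"
    unfolding t_def by (rule orthogonal_rows_combination[OF orth])
  also have "\<dots> = complex_of_real p"
    unfolding u_term p_def by simp
  finally have norm_t: "(\<Sum>n<N. (cmod (t n))\<^sup>2) = p"
    by (simp only: of_real_eq_iff)
  have "t m = (\<Sum>a<d. u a * cnj (u a) * complex_of_real (\<nu> a))"
    unfolding t_def by (intro sum.cong refl) (simp add: u_def)
  then have t_m: "t m = complex_of_real p"
    unfolding u_term p_def by simp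
  have "(cmod (t m))\<^sup>2 \<le> (\<Sum>n<N. (cmod (t n))\<^sup>2)"
    using m by (intro member_le_sum) auto
  then have "p * p \<le> p"
    unfolding norm_t t_m using \<open>0 \<le> p\<close> by (simp add: power2_eq_square)
  then show ?thesis
    using \<open>0 \<le> p\<close> unfolding p_def[symmetric] by (cases "p = 0") auto
qed

lemma orthogonal_rows_partial_sum_bound:
  fixes \<beta> :: "nat \<Rightarrow> nat \<Rightarrow> complex" and \<nu> :: "nat \<Rightarrow> real"
  assumes orth: "orthogonal_rows d N \<beta> \<nu>"
    and antimono: "\<And>a b. a \<le> b \<Longrightarrow> b < d \<Longrightarrow> \<nu> b \<le> \<nu> a"
    and S: "S \<subseteq> {..<N}"
  shows "(\<Sum>m\<in>S. \<Sum>a<d. (cmod (\<beta> a m))\<^sup>2) \<le> (\<Sum>a<min (card S) d. \<nu> a)"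
proof -
  define r where "r a = (\<Sum>m\<in>S. (cmod (\<beta> a m))\<^sup>2)" for a
  define c where "c a = r a / \<nu> a" for a
  note \<nu>_eq = orthogonal_rows_sq_norm[OF orth]
  have r_le: "0 \<le> r a \<and> r a \<le> \<nu> a" if "a < d" for a
    unfolding \<nu>_eq[OF that] r_def using S by (auto intro: sum_nonneg sum_mono2)
  have c: "0 \<le> c a \<and> c a \<le> 1" if "a < d" for a
    using r_le[OF that] by (cases "\<nu> a = 0") (auto simp: c_def divide_le_eq_1)
  have \<nu>c: "\<nu> a * c a = r a" if "a < d" for a
    using r_le[OF that] by (cases "\<nu> a = 0") (auto simp: c_def)
  have "(\<Sum>a<d. c a) = (\<Sum>m\<in>S. \<Sum>a<d. (cmod (\<beta> a m))\<^sup>2 / \<nu> a)"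
    unfolding c_def r_def by (simp add: sum_divide_distrib sum.swap[of _ S])
  also have "\<dots> \<le> (\<Sum>m\<in>S. 1)"
    using S by (intro sum_mono orthogonal_rows_column_bound[OF orth]) auto
  finally have "(\<Sum>a<d. c a) \<le> real (card S)"
    by simp
  then have "(\<Sum>a<d. \<nu> a * c a) \<le> (\<Sum>a<min (card S) d. \<nu> a)"
    using antimono r_le c by (intro weighted_sum_le_initial_sum) (auto intro: order_trans)
  moreover have "(\<Sum>m\<in>S. \<Sum>a<d. (cmod (\<beta> a m))\<^sup>2) = (\<Sum>a<d. \<nu> a * c a)"
    by (simp add: \<nu>c r_def sum.swap[of _ S])
  ultimately show ?thesis
    by simp
qed

lemma rank_one_sum_orthogonal_rows:
  fixes D :: "complex mat" and xs :: "nat \<Rightarrow> complex vec" and c :: "nat \<Rightarrow> real"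
  assumes D: "D \<in> carrier_mat d d"
    and D_eq: "\<And>r s. r < d \<Longrightarrow> s < d \<Longrightarrow>
      D $$ (r, s) = (\<Sum>m<N. complex_of_real (c m) * xs m $ r * cnj (xs m $ s))"
    and c: "\<And>m. m < N \<Longrightarrow> 0 \<le> c m" and xs: "\<And>m. m < N \<Longrightarrow> dim_vec (xs m) = d"
    and eb: "eigenbasis D d es \<nu>"
  shows "orthogonal_rows d N (\<lambda>a m. complex_of_real (sqrt (c m)) * (xs m \<bullet>c es ! a)) ((!) \<nu>)"
  unfolding orthogonal_rows_def
proof (intro allI impI)
  fix a b assume a: "a < d" and b: "b < d"
  have es: "\<And>a. a < d \<Longrightarrow> dim_vec (es ! a) = d"
    using eb unfolding eigenbasis_def by (auto simp: orthonormalD carrier_vecD)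
  have "(\<Sum>m<N. complex_of_real (sqrt (c m)) * (xs m \<bullet>c es ! a) * cnj (complex_of_real (sqrt (c m)) * (xs m \<bullet>c es ! b)))
      = (\<Sum>m<N. complex_of_real (c m) * (xs m \<bullet>c es ! a) * (es ! b \<bullet>c xs m))"
  proof (intro sum.cong refl)
    fix m assume "m \<in> {..<N}"
    then have "cnj (xs m \<bullet>c es ! b) = es ! b \<bullet>c xs m" "sqrt (c m) * sqrt (c m) = c m"
      using c xs es b by (auto intro: cnj_cscalar_prod)
    then show "complex_of_real (sqrt (c m)) * (xs m \<bullet>c es ! a) * cnj (complex_of_real (sqrt (c m)) * (xs m \<bullet>c es ! b))
        = complex_of_real (c m) * (xs m \<bullet>c es ! a) * (es ! b \<bullet>c xs m)"
      by (simp add: mult_ac flip: of_real_mult)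
  qed
  also have "\<dots> = (D *\<^sub>v es ! b) \<bullet>c es ! a"
    using xs es a b by (intro cscalar_prod_rank_one_sum[OF D D_eq, symmetric]) auto
  also have "\<dots> = complex_of_real (\<nu> ! b) * (es ! b \<bullet>c es ! a)"
    using eb es a b unfolding eigenbasis_def by (auto intro: cscalar_prod_smult_left)
  also have "\<dots> = (if a = b then complex_of_real (\<nu> ! a) else 0)"
    using eb a b unfolding eigenbasis_def by (auto simp: orthonormalD)
  finally show "(\<Sum>m<N. complex_of_real (sqrt (c m)) * (xs m \<bullet>c es ! a)
      * cnj (complex_of_real (sqrt (c m)) * (xs m \<bullet>c es ! b))) = (if a = b then complex_of_real (\<nu> ! a) else 0)" .
qed

lemma rank_one_sum_le_top_eigenvalues:
  fixes D :: "complex mat" and xs :: "nat \<Rightarrow> complex vec" and c :: "nat \<Rightarrow> real"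
  assumes D: "D \<in> carrier_mat d d"
    and D_eq: "\<And>r s. r < d \<Longrightarrow> s < d \<Longrightarrow>
      D $$ (r, s) = (\<Sum>m<N. complex_of_real (c m) * xs m $ r * cnj (xs m $ s))"
    and c: "\<And>m. m < N \<Longrightarrow> 0 \<le> c m" and xs: "\<And>m. m < N \<Longrightarrow> dim_vec (xs m) = d"
    and eb: "eigenbasis D d es \<nu>" and sorted: "sorted_wrt (\<ge>) \<nu>" and S: "S \<subseteq> {..<N}"
  shows "(\<Sum>m\<in>S. c m * sq_norm_vec (xs m)) \<le> (\<Sum>a<min (card S) d. \<nu> ! a)"
proof -
  let ?\<beta> = "\<lambda>a m. complex_of_real (sqrt (c m)) * (xs m \<bullet>c es ! a)"
  have es: "orthonormal d es" and len: "length \<nu> = d"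
    using eb unfolding eigenbasis_def by auto
  have "(\<Sum>a<d. (cmod (?\<beta> a m))\<^sup>2) = c m * sq_norm_vec (xs m)" if "m \<in> S" for m
  proof -
    have "(\<Sum>a<d. (cmod (?\<beta> a m))\<^sup>2) = c m * (\<Sum>a<d. (cmod (xs m \<bullet>c es ! a))\<^sup>2)"
      using that S c by (auto simp: norm_mult power_mult_distrib sum_distrib_left)
    then show ?thesis
      using that S xs by (auto simp: parseval[OF es])
  qed
  then have "(\<Sum>m\<in>S. c m * sq_norm_vec (xs m)) = (\<Sum>m\<in>S. \<Sum>a<d. (cmod (?\<beta> a m))\<^sup>2)"
    by simp
  also have "\<dots> \<le> (\<Sum>a<min (card S) d. \<nu> ! a)"
    using sorted len S
    by (intro orthogonal_rows_partial_sum_bound[OF rank_one_sum_orthogonal_rows[OF D D_eq c xs eb]])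
      (auto simp: sorted_wrt_iff_nth_less le_less)
  finally show ?thesis .
qed

definition vec_block :: "nat \<Rightarrow> 'a vec \<Rightarrow> nat \<Rightarrow> 'a vec" where
  "vec_block b w i = vec b (\<lambda>r. w $ (i * b + r))"

lemma sum_sq_norm_vec_block:
  assumes "dim_vec w = a * b"
  shows "(\<Sum>i<a. sq_norm_vec (vec_block b w i)) = sq_norm_vec w"
proof -
  have "(\<Sum>r<b. (cmod (w $ (i * b + r)))\<^sup>2) = (\<Sum>p\<in>{i * b..<i * b + b}. (cmod (w $ p))\<^sup>2)" for i
    using sum.shift_bounds_nat_ivl[of "\<lambda>p. (cmod (w $ p))\<^sup>2" 0 "i * b" b]
    by (simp add: atLeast0LessThan add.commute)
  then show ?thesis
    using assms by (simp add: sq_norm_vec_def vec_block_def sum.nat_group)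
qed

lemma index_diag_block: "r < b \<Longrightarrow> s < b \<Longrightarrow> diag_block b A i $$ (r, s) = A $$ (i * b + r, i * b + s)"
  unfolding diag_block_def by simp

lemma diag_block_rank_one_sum:
  fixes J :: "complex mat"
  assumes J: "J \<in> carrier_mat N N" and eb: "eigenbasis J N ws \<mu>" and i: "i * b + b \<le> N"
    and r: "r < b" and s: "s < b"
  shows "diag_block b (complex_of_real c \<cdot>\<^sub>m J) i $$ (r, s) = (\<Sum>m<N. complex_of_real (c * \<mu> ! m)
      * vec_block b (ws ! m) i $ r * cnj (vec_block b (ws ! m) i $ s))"
proof -
  have "i * b + r < N" "i * b + s < N"
    using i r s by linarith+
  then show ?thesis
    using J r s by (simp add: index_diag_block vec_block_def eigenbasis_expansion[OF J eb]
        sum_distrib_left mult_ac)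
qed

lemma diag_block_eigenbasis:
  fixes J :: "complex mat"
  assumes J: "J \<in> carrier_mat N N" and psd: "psd_mat J" and c: "0 \<le> c" and i: "i * b + b \<le> N"
  defines "D \<equiv> diag_block b (complex_of_real c \<cdot>\<^sub>m J) i"
  shows "\<exists>es. eigenbasis D b es (eigvals D) \<and> sorted_wrt (\<ge>) (eigvals D) \<and> (\<forall>a<b. 0 \<le> eigvals D ! a)"
proof -
  have herm: "mat_adjoint J = J"
    using psd unfolding psd_mat_def by simp
  obtain ws \<mu> where eb: "eigenbasis J N ws \<mu>"
    using hermitian_eigenbasis_exists[OF J herm] by blast
  have D: "D \<in> carrier_mat b b"
    unfolding D_def diag_block_def by simp
  have "mat_adjoint D = D"
  proof (rule eq_matI)
    fix r s assume "r < dim_row D" "s < dim_col D"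
    then have "r < b" "s < b" "i * b + r < N" "i * b + s < N"
      using D i by auto
    then show "mat_adjoint D $$ (r, s) = D $$ (r, s)"
      using D hermitian_index[OF J herm, of "i * b + r" "i * b + s"]
      by (simp add: D_def index_diag_block carrier_matD[OF J])
  qed (use D in auto)
  then obtain es where es: "eigenbasis D b es (eigvals D)" and sorted: "sorted_wrt (\<ge>) (eigvals D)"
    using hermitian_sorted_eigenbasis[OF D] by blast
  \<comment> \<open>The eigenvalues of \<open>D\<close> are nonnegative: they are the squared row norms of its
      rank-one representation.\<close>
  have "orthogonal_rows b N (\<lambda>a m. complex_of_real (sqrt (c * \<mu> ! m)) * (vec_block b (ws ! m) i \<bullet>c es ! a))
      ((!) (eigvals D))"
    using psd_eigenbasis_nonneg[OF psd J eb] c eb unfolding D_def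
    by (intro rank_one_sum_orthogonal_rows[OF D[unfolded D_def] diag_block_rank_one_sum[OF J eb i] _ _ es[unfolded D_def]])
      (auto simp: vec_block_def)
  then show ?thesis
    using es sorted orthogonal_rows_nonneg by blast
qed

lemma diag_block_top_eigvals_bound:
  fixes J :: "complex mat"
  assumes J: "J \<in> carrier_mat N N" and psd: "psd_mat J" and eb: "eigenbasis J N ws \<mu>"
    and c: "0 \<le> c" and i: "i * b + b \<le> N" and k: "k \<le> N"
  shows "(\<Sum>m<k. c * \<mu> ! m * sq_norm_vec (vec_block b (ws ! m) i))
    \<le> (\<Sum>a<min k b. eigvals (diag_block b (complex_of_real c \<cdot>\<^sub>m J) i) ! a)"
proof -
  let ?D = "diag_block b (complex_of_real c \<cdot>\<^sub>m J) i"
  obtain es where es: "eigenbasis ?D b es (eigvals ?D)" and sorted: "sorted_wrt (\<ge>) (eigvals ?D)"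
    using diag_block_eigenbasis[OF J psd c i] by blast
  have "?D \<in> carrier_mat b b"
    unfolding diag_block_def by simp
  from rank_one_sum_le_top_eigenvalues[OF this diag_block_rank_one_sum[OF J eb i] _ _ es sorted, of "{..<k}"]
  show ?thesis
    using psd_eigenbasis_nonneg[OF psd J eb] c k by (auto simp: vec_block_def mult.assoc)
qed

section \<open>Averaged block spectra and majorization\<close>

lemma add_le_mult_of_less: "i < n \<Longrightarrow> i * b + b \<le> n * (b :: nat)"
  by (metis Suc_leI add.commute mult_Suc mult_le_mono1)

lemma sum_pad_zeros:
  fixes g :: "nat \<Rightarrow> 'a :: comm_monoid_add"
  shows "(\<Sum>i<k. if i < d then g i else 0) = (\<Sum>i<min k d. g i)"
  by (induction k) (auto simp: min_def)

lemma sorted_desc_pad_zeros: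
  fixes g :: "nat \<Rightarrow> real"
  assumes antimono: "\<And>a b. a \<le> b \<Longrightarrow> b < d \<Longrightarrow> g b \<le> g a" and nonneg: "\<And>a. a < d \<Longrightarrow> 0 \<le> g a"
  shows "sorted_wrt (\<ge>) (map (\<lambda>k. if k < d then g k else 0) [0..<N])"
  unfolding sorted_wrt_iff_nth_less using antimono nonneg by auto

definition diag_block_average :: "nat \<Rightarrow> nat \<Rightarrow> real \<Rightarrow> complex mat \<Rightarrow> real list" where
  "diag_block_average n b c J = map (\<lambda>k. if k < b
     then 1 / c * (\<Sum>i<n. eigvals (diag_block b (complex_of_real c \<cdot>\<^sub>m J) i) ! k) else 0) [0..<n * b]"

lemma sorted_diag_block_average:
  fixes J :: "complex mat"
  assumes J: "J \<in> carrier_mat (n * b) (n * b)" and psd: "psd_mat J" and c: "0 \<le> c"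
  shows "sorted_wrt (\<ge>) (diag_block_average n b c J)"
proof -
  let ?\<nu> = "\<lambda>i. eigvals (diag_block b (complex_of_real c \<cdot>\<^sub>m J) i)"
  have \<nu>: "sorted_wrt (\<ge>) (?\<nu> i) \<and> length (?\<nu> i) = b \<and> (\<forall>a<b. 0 \<le> ?\<nu> i ! a)" if "i < n" for i
    using diag_block_eigenbasis[OF J psd c add_le_mult_of_less[OF that]] unfolding eigenbasis_def by auto
  have antimono: "?\<nu> i ! a' \<le> ?\<nu> i ! a" if "a \<le> a'" "a' < b" "i < n" for a a' i
    using \<nu>[OF \<open>i < n\<close>] that by (cases "a = a'") (auto simp: sorted_wrt_iff_nth_less)
  show ?thesis
    unfolding diag_block_average_def using \<nu> c
    by (intro sorted_desc_pad_zeros) (auto intro!: divide_right_mono divide_nonneg_nonneg sum_mono sum_nonneg antimono)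
qed

lemma eigvals_prefix_le_diag_block_average:
  fixes J :: "complex mat"
  assumes J: "J \<in> carrier_mat (n * b) (n * b)" and psd: "psd_mat J" and c: "0 < c" and k: "k \<le> n * b"
  shows "(\<Sum>m<k. eigvals J ! m) \<le> (\<Sum>a<k. diag_block_average n b c J ! a)"
proof -
  let ?\<nu> = "\<lambda>i. eigvals (diag_block b (complex_of_real c \<cdot>\<^sub>m J) i)"
  let ?\<mu> = "eigvals J"
  obtain ws where eb: "eigenbasis J (n * b) ws ?\<mu>"
    using hermitian_sorted_eigenbasis[OF J] psd unfolding psd_mat_def by blast
  let ?x = "\<lambda>m i. sq_norm_vec (vec_block b (ws ! m) i)"
  have unit: "(\<Sum>i<n. ?x m i) = 1" if "m < n * b" for m
  proof -
    have "ws ! m \<in> carrier_vec (n * b)" "ws ! m \<bullet>c ws ! m = 1"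
      using eb that unfolding eigenbasis_def by (auto simp: orthonormalD)
    then show ?thesis
      by (simp add: sum_sq_norm_vec_block cscalar_prod_self)
  qed
  have "(\<Sum>m<k. ?\<mu> ! m) = (\<Sum>m<k. ?\<mu> ! m * (\<Sum>i<n. ?x m i))"
    using k unit by simp
  also have "\<dots> = (\<Sum>i<n. (\<Sum>m<k. c * ?\<mu> ! m * ?x m i) / c)"
    using c by (simp add: sum_distrib_left sum_divide_distrib sum.swap[of _ "{..<n}"])
  also have "\<dots> \<le> (\<Sum>i<n. (\<Sum>a<min k b. ?\<nu> i ! a) / c)"
    using c k add_le_mult_of_less
    by (intro sum_mono divide_right_mono diag_block_top_eigvals_bound[OF J psd eb]) auto
  also have "\<dots> = (\<Sum>a<k. if a < b then 1 / c * (\<Sum>i<n. ?\<nu> i ! a) else 0)"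
    by (simp add: sum_pad_zeros sum_divide_distrib sum.swap[of _ "{..<n}"])
  also have "\<dots> = (\<Sum>a<k. diag_block_average n b c J ! a)"
    using k by (intro sum.cong refl) (auto simp: diag_block_average_def)
  finally show ?thesis .
qed

lemma rev_sort_sorted_desc: "sorted_wrt (\<ge>) xs \<Longrightarrow> rev (sort xs) = xs"
  by (metis properties_for_sort rev_rev_ident sorted_wrt_rev mset_rev)

lemma majorizes_of_sorted_prefix_sums:
  assumes len: "length x = length y" and x: "sorted_wrt (\<ge>) x" and y: "sorted_wrt (\<ge>) y"
    and prefix: "\<And>k. k \<le> length x \<Longrightarrow> (\<Sum>i<k. y ! i) \<le> (\<Sum>i<k. x ! i)"
  shows "majorizes x y"
  unfolding majorizes_def rev_sort_sorted_desc[OF x] rev_sort_sorted_desc[OF y]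
  using len prefix by (simp add: sum_list_sum_nth atLeast0LessThan min_def)

theorem theorem1:
  fixes d :: nat and J :: "complex mat"
  assumes "d \<ge> 1"
    and "J \<in> carrier_mat (d * d) (d * d)"
    and "psd_mat J"
  defines "D \<equiv> (\<lambda>i. diag_block d (of_nat d \<cdot>\<^sub>m J) i)"
  shows "majorizes
           (map (\<lambda>k. if k < d then (1 / real d) * (\<Sum>i<d. eigvals (D i) ! k) else 0) [0..<d * d])
           (eigvals J)"
proof -
  note J = assms(2) and psd = assms(3)
  have avg: "map (\<lambda>k. if k < d then (1 / real d) * (\<Sum>i<d. eigvals (D i) ! k) else 0) [0..<d * d]
      = diag_block_average d d (real d) J"
    unfolding D_def diag_block_average_def by simp
  obtain ws where "eigenbasis J (d * d) ws (eigvals J)" and sorted: "sorted_wrt (\<ge>) (eigvals J)"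
    using hermitian_sorted_eigenbasis[OF J] psd unfolding psd_mat_def by blast
  then have "length (eigvals J) = d * d"
    unfolding eigenbasis_def by simp
  then show ?thesis
    unfolding avg using sorted_diag_block_average[OF J psd] sorted assms(1)
    by (intro majorizes_of_sorted_prefix_sums eigvals_prefix_le_diag_block_average[OF J psd])
      (auto simp: diag_block_average_def)
qed

end
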